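(* Let $\pi$ be an $r$-homogeneous strongly log-concave distribution with associated matroid $\mathcal{M}=(E,\mathcal{I})$, and let $I\in\mathcal{I}$ with $|I|\le r-2$. Then the modified log-Sobolev constant of the walk $P^{\wedge}_{I,1}$ satisfies $\rho(P^{\wedge}_{I,1})\ge\frac12$.
   Context: $\pi:2^{[n]}\to\mathbb{R}_{\ge0}$ has generating polynomial $g_\pi(x)=\sum_S\pi(S)\prod_{i\in S}x_i$; $r$-homogeneous means the support consists of $r$-sets; strongly log-concave means for every $J\subseteq[n]$, $\nabla^2\log(\partial_J g_\pi)$ is negative semidefinite at the all-ones vector. The support $\mathcal{B}$ is the set of bases of a rank-$r$ matroid $\mathcal{M}=(E,\mathcal{I})$. Weights: $w(J)=(r-|J|)!\sum_{B\in\mathcal{B},B\supseteq J}\pi(B)$ for $J\in\mathcal{I}$, $w(J)=0$ otherwise. Let $\Omega_I=\{v\in E\setminus I: I\cup\{v\}\in\mathcal{I}\}$ with distribution $\pi_{I,1}(v)=w(I\cup\{v\})/w(I)$. The walk $P^{\wedge}_{I,1}$ on $\Omega_I$: $P^{\wedge}_{I,1}(u,u)=\frac12$; $P^{\wedge}_{I,1}(u,v)=\frac{w(I\cup\{u,v\})}{2w(I\cup\{u\})}$ if $u\neq v$ and $I\cup\{u,v\}\in\mathcal{I}$; $0$ otherwise. It is reversible with stationary distribution $\pi_{I,1}$. For reversible $P$ with stationary $\mu$: $\mathcal{E}_P(f,g)=\sum_{x,y}\mu(x)f(x)[I-P](x,y)g(y)$, $\mathrm{Ent}_\mu(f)=\mathbb{E}_\mu(f\log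 f)-\mathbb{E}_\mu f\log\mathbb{E}_\mu f$ ($0\log0=0$), $\rho(P)=\inf\{\mathcal{E}_P(f,\log f)/\mathrm{Ent}_\mu(f): f\ge0,\ \mathrm{Ent}_\mu(f)\ne0\}$. *)

theory Defs
  imports "HOL-Analysis.Analysis"
begin

definition gen_poly :: "'a set \<Rightarrow> ('a set \<Rightarrow> real) \<Rightarrow> ('a \<Rightarrow> real) \<Rightarrow> real" where
  "gen_poly E \<pi> x = (\<Sum>S\<in>Pow E. \<pi> S * (\<Prod>i\<in>S. x i))"

definition partial :: "'a \<Rightarrow> (('a \<Rightarrow> real) \<Rightarrow> real) \<Rightarrow> ('a \<Rightarrow> real) \<Rightarrow> real" where
  "partial i F = (\<lambda>x. deriv (\<lambda>t. F (x(i := t))) (x i))"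

definition partial_set :: "('a::linorder) set \<Rightarrow> (('a \<Rightarrow> real) \<Rightarrow> real) \<Rightarrow> ('a \<Rightarrow> real) \<Rightarrow> real" where
  "partial_set J F = foldr partial (sorted_list_of_set J) F"

definition strongly_log_concave :: "('a::linorder) set \<Rightarrow> ('a set \<Rightarrow> real) \<Rightarrow> bool" where
  "strongly_log_concave E \<pi> \<longleftrightarrow>
     (\<forall>J \<subseteq> E. \<forall>v :: 'a \<Rightarrow> real.
        (\<Sum>i\<in>E. \<Sum>j\<in>E. v i * v j *
            partial i (partial j (\<lambda>x. ln (partial_set J (gen_poly E \<pi>) x))) (\<lambda>_. 1)) \<le> 0)"

definition matroid_bases :: "'a set \<Rightarrow> 'a set set \<Rightarrow> bool" where
  "matroid_bases E \<B> \<longleftrightarrow> finite E \<and> \<B> \<noteq> {} \<and> (\<forall>B\<in>\<B>. B \<subseteq> E) \<and>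
     (\<forall>B1\<in>\<B>. \<forall>B2\<in>\<B>. \<forall>x\<in>B1 - B2. \<exists>y\<in>B2 - B1. insert y (B1 - {x}) \<in> \<B>)"

definition support :: "('a set \<Rightarrow> real) \<Rightarrow> 'a set set" where
  "support \<pi> = {S. \<pi> S \<noteq> 0}"

definition indep :: "('a set \<Rightarrow> real) \<Rightarrow> 'a set set" where
  "indep \<pi> = {I. \<exists>B\<in>support \<pi>. I \<subseteq> B}"

definition wt :: "('a set \<Rightarrow> real) \<Rightarrow> nat \<Rightarrow> 'a set \<Rightarrow> real" where
  "wt \<pi> r J = (if J \<in> indep \<pi>
      then fact (r - card J) * (\<Sum>B\<in>{B\<in>support \<pi>. J \<subseteq> B}. \<pi> B) else 0)"

definition Omega :: "'a set \<Rightarrow> ('a set \<Rightarrow> real) \<Rightarrow> 'a set \<Rightarrow> 'a set" where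
  "Omega E \<pi> I = {v \<in> E - I. insert v I \<in> indep \<pi>}"

definition pi_link :: "('a set \<Rightarrow> real) \<Rightarrow> nat \<Rightarrow> 'a set \<Rightarrow> 'a \<Rightarrow> real" where
  "pi_link \<pi> r I v = wt \<pi> r (insert v I) / wt \<pi> r I"

definition P_down_up :: "('a set \<Rightarrow> real) \<Rightarrow> nat \<Rightarrow> 'a set \<Rightarrow> 'a \<Rightarrow> 'a \<Rightarrow> real" where
  "P_down_up \<pi> r I u v =
     (if u = v then 1/2
      else if insert u (insert v I) \<in> indep \<pi>
        then wt \<pi> r (insert u (insert v I)) / (2 * wt \<pi> r (insert u I))
      else 0)"

definition dirichlet :: "'s set \<Rightarrow> ('s \<Rightarrow> real) \<Rightarrow> ('s \<Rightarrow> 's \<Rightarrow> real)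
    \<Rightarrow> ('s \<Rightarrow> real) \<Rightarrow> ('s \<Rightarrow> real) \<Rightarrow> real" where
  "dirichlet \<Omega> \<mu> P f g =
     (\<Sum>x\<in>\<Omega>. \<Sum>y\<in>\<Omega>. \<mu> x * f x * ((if x = y then 1 else 0) - P x y) * g y)"

definition expect :: "'s set \<Rightarrow> ('s \<Rightarrow> real) \<Rightarrow> ('s \<Rightarrow> real) \<Rightarrow> real" where
  "expect \<Omega> \<mu> f = (\<Sum>x\<in>\<Omega>. \<mu> x * f x)"

text \<open>Note ln 0 = 0 in Isabelle, so 0 * ln 0 = 0 as required.\<close>
definition ent :: "'s set \<Rightarrow> ('s \<Rightarrow> real) \<Rightarrow> ('s \<Rightarrow> real) \<Rightarrow> real" where
  "ent \<Omega> \<mu> f = expect \<Omega> \<mu> (\<lambda>x. f x * ln (f x))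
                 - expect \<Omega> \<mu> f * ln (expect \<Omega> \<mu> f)"

text \<open>The infimum ranges over positive f: for f with
  zeros, E(f, log f) is +infinity in the extended-real reading whenever a zero is adjacent
  to a positive value, so such f do not affect the infimum.\<close>
definition mlsi_const :: "'s set \<Rightarrow> ('s \<Rightarrow> real) \<Rightarrow> ('s \<Rightarrow> 's \<Rightarrow> real) \<Rightarrow> real" where
  "mlsi_const \<Omega> \<mu> P = Inf {dirichlet \<Omega> \<mu> P f (\<lambda>x. ln (f x)) / ent \<Omega> \<mu> f | f.
       (\<forall>x\<in>\<Omega>. f x > 0) \<and> ent \<Omega> \<mu> f \<noteq> 0}"

end

theory Submission
  imports Defs
begin

text \<open>Write \<open>Z\<close>, \<open>Z\<^sub>x\<close>, \<open>Z\<^sub>x\<^sub>y\<close> for the \<open>\<pi>\<close>-mass of the bases containing \<open>I\<close>,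
  \<open>I + x\<close>, \<open>I + x + y\<close>, and \<open>k = r - |I|\<close>. Then \<open>\<pi>\<^sub>I\<^sub>,\<^sub>1(x) = Z\<^sub>x / (k Z)\<close> and
  off the diagonal \<open>P\<^sup>\<and>\<^sub>I\<^sub>,\<^sub>1(x,y) = M(x,y) / (2 \<pi>\<^sub>I\<^sub>,\<^sub>1(x))\<close> for the symmetric kernel
  \<open>M = Z\<^sub>x\<^sub>y / (k (k - 1) Z)\<close>, whose row sums are \<open>\<pi>\<^sub>I\<^sub>,\<^sub>1\<close>. The generating polynomial
  is multi-affine, so the Hessian of \<open>log \<partial>\<^sub>I g\<^sub>\<pi>\<close> at \<open>1\<close> is \<open>(Z Z\<^sub>x\<^sub>y - Z\<^sub>x Z\<^sub>y) / Z\<^sup>2\<close>, and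
  strong log-concavity says that the quadratic form of \<open>M\<close> is nonpositive on
  \<open>\<pi>\<^sub>I\<^sub>,\<^sub>1\<close>-centred vectors, i.e. \<open>f\<^sup>T M f \<le> (E f)\<^sup>2\<close>. Now
  \<open>2 \<E>(f, log f) = E[f log f] - \<Sum> M(x,y) f(x) log f(y)\<close>, and bounding
  \<open>log f(y) \<le> log m + f(y)/m - 1\<close> with \<open>m = E f\<close> gives \<open>\<Sum> M(x,y) f(x) log f(y) \<le> m log m\<close>,
  hence \<open>\<E>(f, log f) \<ge> Ent(f) / 2\<close>.\<close>

lemma diff_le_mult_ln_div:
  fixes a m :: real
  assumes "0 < a" "0 < m"
  shows "a - m \<le> a * ln (a / m)"
proof -
  have "ln (m / a) \<le> m / a - 1" using assms by (intro ln_le_minus_one) simp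
  then show ?thesis using assms by (simp add: ln_div field_simps)
qed

lemma diff_less_mult_ln_div:
  fixes a m :: real
  assumes "0 < a" "0 < m" "a \<noteq> m"
  shows "a - m < a * ln (a / m)"
proof -
  have "ln (m / a) \<noteq> m / a - 1" using assms ln_eq_minus_one[of "m / a"] by auto
  then have "ln (m / a) < m / a - 1" using assms ln_le_minus_one[of "m / a"] by simp
  then show ?thesis using assms by (simp add: ln_div field_simps)
qed

lemma expect_pos:
  assumes "finite \<Omega>" "\<And>x. x \<in> \<Omega> \<Longrightarrow> 0 \<le> \<mu> x" "(\<Sum>x\<in>\<Omega>. \<mu> x) = 1"
    and "\<And>x. x \<in> \<Omega> \<Longrightarrow> 0 < f x"
  shows "0 < expect \<Omega> \<mu> f"
proof -
  obtain u where "u \<in> \<Omega>" "0 < \<mu> u"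
    using assms(2,3) by (metis less_eq_real_def sum.neutral zero_neq_one)
  then show ?thesis unfolding expect_def
    using assms by (intro sum_pos2[of _ u]) (auto intro: mult_nonneg_nonneg less_imp_le)
qed

lemma ent_eq_sum_divergence:
  assumes "finite \<Omega>" "\<And>x. x \<in> \<Omega> \<Longrightarrow> 0 \<le> \<mu> x" "(\<Sum>x\<in>\<Omega>. \<mu> x) = 1"
    and "\<And>x. x \<in> \<Omega> \<Longrightarrow> 0 < f x"
  defines "m \<equiv> expect \<Omega> \<mu> f"
  shows "ent \<Omega> \<mu> f = (\<Sum>x\<in>\<Omega>. \<mu> x * (f x * ln (f x / m) - (f x - m)))"
proof -
  have "0 < m" unfolding m_def using assms(1-4) by (rule expect_pos)
  then have "\<mu> x * (f x * ln (f x / m) - (f x - m))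
      = \<mu> x * (f x * ln (f x)) - \<mu> x * f x * ln m - \<mu> x * f x + m * \<mu> x" if "x \<in> \<Omega>" for x
    using assms(4)[OF that] by (simp add: ln_div algebra_simps)
  then have "(\<Sum>x\<in>\<Omega>. \<mu> x * (f x * ln (f x / m) - (f x - m)))
      = expect \<Omega> \<mu> (\<lambda>x. f x * ln (f x)) - m * ln m - m + m * (\<Sum>x\<in>\<Omega>. \<mu> x)"
    unfolding m_def expect_def
    by (simp add: sum.distrib sum_subtractf sum_distrib_left sum_distrib_right)
  then show ?thesis using assms(3) unfolding ent_def m_def by simp
qed

lemma ent_nonneg:
  assumes "finite \<Omega>" "\<And>x. x \<in> \<Omega> \<Longrightarrow> 0 \<le> \<mu> x" "(\<Sum>x\<in>\<Omega>. \<mu> x) = 1"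
    and "\<And>x. x \<in> \<Omega> \<Longrightarrow> 0 < f x"
  shows "0 \<le> ent \<Omega> \<mu> f"
proof -
  have "0 < expect \<Omega> \<mu> f" using assms by (rule expect_pos)
  then have "0 \<le> \<mu> x * (f x * ln (f x / expect \<Omega> \<mu> f) - (f x - expect \<Omega> \<mu> f))"
    if "x \<in> \<Omega>" for x
    using that assms(2,4) diff_le_mult_ln_div by simp
  then show ?thesis by (simp add: ent_eq_sum_divergence[OF assms] sum_nonneg)
qed

lemma ent_pos:
  assumes "finite \<Omega>" "\<And>x. x \<in> \<Omega> \<Longrightarrow> 0 \<le> \<mu> x" "(\<Sum>x\<in>\<Omega>. \<mu> x) = 1"
    and "\<And>x. x \<in> \<Omega> \<Longrightarrow> 0 < f x"
    and "u \<in> \<Omega>" "0 < \<mu> u" "f u \<noteq> expect \<Omega> \<mu> f"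
  shows "0 < ent \<Omega> \<mu> f"
proof -
  define d where "d x = \<mu> x * (f x * ln (f x / expect \<Omega> \<mu> f) - (f x - expect \<Omega> \<mu> f))" for x
  have m: "0 < expect \<Omega> \<mu> f" using assms(1-4) by (rule expect_pos)
  then have "0 \<le> d x" if "x \<in> \<Omega>" for x
    using that assms(2,4) diff_le_mult_ln_div unfolding d_def by simp
  moreover have "0 < d u"
    using m assms(4-7) diff_less_mult_ln_div unfolding d_def by simp
  ultimately have "0 < sum d \<Omega>" using assms(1,5) by (intro sum_pos2)
  then show ?thesis unfolding d_def by (simp add: ent_eq_sum_divergence[OF assms(1-4)])
qed

lemma mlsi_const_greatest:
  assumes "finite \<Omega>" "\<And>x. x \<in> \<Omega> \<Longrightarrow> 0 \<le> \<mu> x" "(\<Sum>x\<in>\<Omega>. \<mu> x) = 1"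
    and "\<And>x. x \<in> \<Omega> \<Longrightarrow> 0 < f\<^sub>0 x" "ent \<Omega> \<mu> f\<^sub>0 \<noteq> 0"
    and "\<And>f. (\<And>x. x \<in> \<Omega> \<Longrightarrow> 0 < f x) \<Longrightarrow> c * ent \<Omega> \<mu> f \<le> dirichlet \<Omega> \<mu> P f (\<lambda>x. ln (f x))"
  shows "c \<le> mlsi_const \<Omega> \<mu> P"
  unfolding mlsi_const_def
proof (rule cInf_greatest)
  show "{dirichlet \<Omega> \<mu> P f (\<lambda>x. ln (f x)) / ent \<Omega> \<mu> f |f. (\<forall>x\<in>\<Omega>. 0 < f x) \<and> ent \<Omega> \<mu> f \<noteq> 0} \<noteq> {}"
    using assms(4,5) by blast
next
  fix q assume "q \<in> {dirichlet \<Omega> \<mu> P f (\<lambda>x. ln (f x)) / ent \<Omega> \<mu> f |f. (\<forall>x\<in>\<Omega>. 0 < f x) \<and> ent \<Omega> \<mu> f \<noteq> 0}"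
  then obtain f where f: "\<And>x. x \<in> \<Omega> \<Longrightarrow> 0 < f x" "ent \<Omega> \<mu> f \<noteq> 0"
    and q: "q = dirichlet \<Omega> \<mu> P f (\<lambda>x. ln (f x)) / ent \<Omega> \<mu> f"
    by blast
  have "0 < ent \<Omega> \<mu> f" using ent_nonneg[of \<Omega> \<mu> f, OF assms(1-3) f(1)] f(2) by simp
  then show "c \<le> q" unfolding q using assms(6)[OF f(1)] by (simp add: le_divide_eq)
qed

locale walk_kernel =
  fixes \<Omega> :: "'s set" and \<mu> :: "'s \<Rightarrow> real" and M :: "'s \<Rightarrow> 's \<Rightarrow> real"
  assumes finite_\<Omega>: "finite \<Omega>"
    and \<mu>_pos: "x \<in> \<Omega> \<Longrightarrow> 0 < \<mu> x"
    and sum_\<mu>: "(\<Sum>x\<in>\<Omega>. \<mu> x) = 1"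
    and M_sym: "x \<in> \<Omega> \<Longrightarrow> y \<in> \<Omega> \<Longrightarrow> M x y = M y x"
    and M_nonneg: "x \<in> \<Omega> \<Longrightarrow> y \<in> \<Omega> \<Longrightarrow> 0 \<le> M x y"
    and M_diag: "x \<in> \<Omega> \<Longrightarrow> M x x = 0"
    and sum_M_row: "x \<in> \<Omega> \<Longrightarrow> (\<Sum>y\<in>\<Omega>. M x y) = \<mu> x"
begin

lemma \<mu>_nonneg: "x \<in> \<Omega> \<Longrightarrow> 0 \<le> \<mu> x"
  using \<mu>_pos by (rule less_imp_le)

lemma sum_M_col: "y \<in> \<Omega> \<Longrightarrow> (\<Sum>x\<in>\<Omega>. M x y) = \<mu> y"
  using sum_M_row M_sym by (metis (no_types, lifting) sum.cong)

lemma sum_M_weighted: "(\<Sum>x\<in>\<Omega>. \<Sum>y\<in>\<Omega>. M x y * f x) = expect \<Omega> \<mu> f"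
  unfolding expect_def by (simp add: sum_distrib_right[symmetric] sum_M_row)

lemma dirichlet_lazy:
  assumes "\<And>x y. x \<in> \<Omega> \<Longrightarrow> y \<in> \<Omega> \<Longrightarrow> P x y = (if x = y then 1/2 else M x y / (2 * \<mu> x))"
  shows "dirichlet \<Omega> \<mu> P f g
    = (expect \<Omega> \<mu> (\<lambda>x. f x * g x) - (\<Sum>x\<in>\<Omega>. \<Sum>y\<in>\<Omega>. M x y * f x * g y)) / 2"
proof -
  have "\<mu> x * f x * ((if x = y then 1 else 0) - P x y) * g y
      = ((if x = y then \<mu> x * (f x * g x) else 0) - M x y * f x * g y) / 2"
    if "x \<in> \<Omega>" "y \<in> \<Omega>" for x y
    using assms[OF that] M_diag[OF that(1)] \<mu>_pos[OF that(1)] by (cases "x = y") (simp_all add: field_simps)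
  then have "dirichlet \<Omega> \<mu> P f g
      = (\<Sum>x\<in>\<Omega>. \<Sum>y\<in>\<Omega>. ((if x = y then \<mu> x * (f x * g x) else 0) - M x y * f x * g y) / 2)"
    unfolding dirichlet_def by (intro sum.cong refl)
  also have "\<dots> = (expect \<Omega> \<mu> (\<lambda>x. f x * g x) - (\<Sum>x\<in>\<Omega>. \<Sum>y\<in>\<Omega>. M x y * f x * g y)) / 2"
    unfolding expect_def using finite_\<Omega>
    by (simp add: sum_divide_distrib[symmetric] sum_subtractf sum.delta)
  finally show ?thesis .
qed

lemma ent_nonzero_witness:
  assumes "u \<in> \<Omega>" "v \<in> \<Omega>" "u \<noteq> v"
  obtains f where "\<And>x. x \<in> \<Omega> \<Longrightarrow> 0 < f x" "ent \<Omega> \<mu> f \<noteq> 0"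
proof
  define f where "f x = (if x = u then 2 else 1 :: real)" for x
  show pos: "0 < f x" for x unfolding f_def by simp
  have "\<mu> u + \<mu> v \<le> (\<Sum>x\<in>\<Omega>. \<mu> x)"
    using sum_mono2[OF finite_\<Omega>, of "{u, v}" \<mu>] assms \<mu>_nonneg by auto
  then have "\<mu> u < 1" using sum_\<mu> \<mu>_pos[OF assms(2)] by simp
  moreover have "expect \<Omega> \<mu> f = (\<Sum>x\<in>\<Omega>. \<mu> x + (if x = u then \<mu> x else 0))"
    unfolding expect_def f_def by (intro sum.cong) auto
  then have "expect \<Omega> \<mu> f = 1 + \<mu> u"
    using sum_\<mu> assms(1) finite_\<Omega> by (simp add: sum.distrib)
  ultimately have "f u \<noteq> expect \<Omega> \<mu> f" unfolding f_def by simp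
  then show "ent \<Omega> \<mu> f \<noteq> 0"
    using ent_pos[of \<Omega> \<mu> f u, OF finite_\<Omega> \<mu>_nonneg sum_\<mu> pos assms(1) \<mu>_pos[OF assms(1)]] by simp
qed

end

text \<open>Equivalently, \<open>D\<^sup>-\<^sup>1 M\<close> with \<open>D = diag \<mu>\<close> has no positive eigenvalue other than
  its Perron eigenvalue \<open>1\<close>.\<close>
locale spectral_walk_kernel = walk_kernel +
  assumes centred_quadratic_nonpos:
    "expect \<Omega> \<mu> h = 0 \<Longrightarrow> (\<Sum>x\<in>\<Omega>. \<Sum>y\<in>\<Omega>. M x y * h x * h y) \<le> 0"
begin

lemma quadratic_le_expect_sq: "(\<Sum>x\<in>\<Omega>. \<Sum>y\<in>\<Omega>. M x y * f x * f y) \<le> (expect \<Omega> \<mu> f)\<^sup>2"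
proof -
  define m where "m = expect \<Omega> \<mu> f"
  have "expect \<Omega> \<mu> (\<lambda>x. f x - m) = 0"
    using sum_\<mu> unfolding expect_def m_def
    by (simp add: right_diff_distrib sum_subtractf sum_distrib_right[symmetric])
  then have "0 \<ge> (\<Sum>x\<in>\<Omega>. \<Sum>y\<in>\<Omega>. M x y * (f x - m) * (f y - m))"
    by (rule centred_quadratic_nonpos)
  also have "(\<Sum>x\<in>\<Omega>. \<Sum>y\<in>\<Omega>. M x y * (f x - m) * (f y - m))
      = (\<Sum>x\<in>\<Omega>. \<Sum>y\<in>\<Omega>. M x y * f x * f y) - m * (\<Sum>x\<in>\<Omega>. \<Sum>y\<in>\<Omega>. M x y * f x)
        - m * (\<Sum>y\<in>\<Omega>. \<Sum>x\<in>\<Omega>. M x y * f y) + m\<^sup>2 * (\<Sum>x\<in>\<Omega>. \<Sum>y\<in>\<Omega>. M x y)"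
    by (subst sum.swap[of _ \<Omega> \<Omega>])
      (simp add: algebra_simps power2_eq_square sum.distrib sum_subtractf sum_distrib_left)
  also have "\<dots> = (\<Sum>x\<in>\<Omega>. \<Sum>y\<in>\<Omega>. M x y * f x * f y) - m\<^sup>2"
    using sum_M_weighted[of f] sum_M_weighted[of "\<lambda>_. 1"] sum_\<mu> sum_M_col
    unfolding m_def expect_def by (simp add: power2_eq_square sum_distrib_right[symmetric])
  finally show ?thesis unfolding m_def by simp
qed

text \<open>Bound \<open>ln\<close> by its tangent at \<open>m = E\<^sub>\<mu> f\<close>, then apply \<open>quadratic_le_expect_sq\<close>.\<close>
lemma cross_entropy_le:
  assumes "\<And>x. x \<in> \<Omega> \<Longrightarrow> 0 < f x"
  shows "(\<Sum>x\<in>\<Omega>. \<Sum>y\<in>\<Omega>. M x y * f x * ln (f y)) \<le> expect \<Omega> \<mu> f * ln (expect \<Omega> \<mu> f)"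
proof -
  define m where "m = expect \<Omega> \<mu> f"
  have m: "0 < m" unfolding m_def using finite_\<Omega> \<mu>_nonneg sum_\<mu> assms by (rule expect_pos)
  have "M x y * f x * ln (f y) \<le> M x y * f x * (ln m + f y / m - 1)"
    if "x \<in> \<Omega>" "y \<in> \<Omega>" for x y
  proof (rule mult_left_mono)
    show "ln (f y) \<le> ln m + f y / m - 1"
      using ln_le_minus_one[of "f y / m"] assms[OF that(2)] m by (simp add: ln_div)
    show "0 \<le> M x y * f x" using M_nonneg[OF that] assms[OF that(1)] by simp
  qed
  then have "(\<Sum>x\<in>\<Omega>. \<Sum>y\<in>\<Omega>. M x y * f x * ln (f y))
      \<le> (\<Sum>x\<in>\<Omega>. \<Sum>y\<in>\<Omega>. M x y * f x * (ln m + f y / m - 1))"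
    by (intro sum_mono)
  also have "\<dots> = (ln m - 1) * (\<Sum>x\<in>\<Omega>. \<Sum>y\<in>\<Omega>. M x y * f x)
      + (\<Sum>x\<in>\<Omega>. \<Sum>y\<in>\<Omega>. M x y * f x * f y) / m"
    by (simp add: algebra_simps add_divide_distrib diff_divide_distrib sum.distrib
        sum_subtractf sum_distrib_left sum_divide_distrib)
  also have "\<dots> \<le> (ln m - 1) * m + m\<^sup>2 / m"
    using quadratic_le_expect_sq[of f] m unfolding sum_M_weighted m_def
    by (intro add_left_mono divide_right_mono) auto
  also have "\<dots> = m * ln m" using m by (simp add: power2_eq_square algebra_simps)
  finally show ?thesis unfolding m_def .
qed

lemma ent_le_twice_dirichlet:
  assumes "\<And>x y. x \<in> \<Omega> \<Longrightarrow> y \<in> \<Omega> \<Longrightarrow> P x y = (if x = y then 1/2 else M x y / (2 * \<mu> x))"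
    and "\<And>x. x \<in> \<Omega> \<Longrightarrow> 0 < f x"
  shows "ent \<Omega> \<mu> f / 2 \<le> dirichlet \<Omega> \<mu> P f (\<lambda>x. ln (f x))"
  using cross_entropy_le[of f, OF assms(2)] dirichlet_lazy[of P f "\<lambda>x. ln (f x)", OF assms(1)]
  unfolding ent_def by simp

lemma mlsi_const_ge_half:
  assumes "\<And>x y. x \<in> \<Omega> \<Longrightarrow> y \<in> \<Omega> \<Longrightarrow> P x y = (if x = y then 1/2 else M x y / (2 * \<mu> x))"
    and "u \<in> \<Omega>" "v \<in> \<Omega>" "u \<noteq> v"
  shows "1/2 \<le> mlsi_const \<Omega> \<mu> P"
proof -
  obtain f\<^sub>0 where "\<And>x. x \<in> \<Omega> \<Longrightarrow> 0 < f\<^sub>0 x" "ent \<Omega> \<mu> f\<^sub>0 \<noteq> 0"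
    using ent_nonzero_witness assms(2-4) by blast
  then show ?thesis
    using finite_\<Omega> \<mu>_nonneg sum_\<mu> ent_le_twice_dirichlet[OF assms(1)]
    by (intro mlsi_const_greatest[of \<Omega> \<mu> f\<^sub>0]) auto
qed

end

definition affine_in :: "'a \<Rightarrow> (('a \<Rightarrow> real) \<Rightarrow> real) \<Rightarrow> (('a \<Rightarrow> real) \<Rightarrow> real) \<Rightarrow> bool" where
  "affine_in i F G \<longleftrightarrow> (\<forall>x t. F (x(i := t)) = F (x(i := 0)) + t * G x)"

lemma affine_in_upd: "affine_in i F G \<Longrightarrow> F (x(i := t)) = F (x(i := 0)) + t * G x"
  unfolding affine_in_def by blast

lemma affine_in_point: "affine_in i F G \<Longrightarrow> F x = F (x(i := 0)) + x i * G x"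
  using affine_in_upd[of i F G x "x i"] by simp

lemma affine_in_line:
  assumes "affine_in i F G"
  shows "(\<lambda>t. F (x(i := t))) = (\<lambda>t. F (x(i := 0)) + t * G x)"
proof
  show "F (x(i := t)) = F (x(i := 0)) + t * G x" for t using assms by (rule affine_in_upd)
qed

lemma partial_affine_in:
  assumes "affine_in i F G"
  shows "partial i F = G"
proof
  fix x
  have "((\<lambda>t. F (x(i := 0)) + t * G x) has_field_derivative G x) (at (x i))"
    by (auto intro!: derivative_eq_intros)
  then show "partial i F x = G x"
    unfolding partial_def affine_in_line[OF assms] by (rule DERIV_imp_deriv)
qed

lemma partial_ln_affine_in:
  assumes "affine_in i F G" "0 < F x"
  shows "partial i (\<lambda>y. ln (F y)) x = G x / F x"
proof -
  have "((\<lambda>t. ln (F (x(i := 0)) + t * G x)) has_field_derivative G x / F x) (at (x i))"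
    using assms(2) affine_in_point[OF assms(1), of x] by (auto intro!: derivative_eq_intros)
  moreover have "(\<lambda>t. ln (F (x(i := t)))) = (\<lambda>t. ln (F (x(i := 0)) + t * G x))"
    using affine_in_line[OF assms(1), of x] by (rule arg_cong[where f = "\<lambda>h t. ln (h t)"])
  ultimately show ?thesis unfolding partial_def by (simp add: DERIV_imp_deriv)
qed

text \<open>Along the line \<open>t \<mapsto> x(i := t)\<close> both \<open>F\<close> and \<open>\<partial>\<^sub>j F\<close> are affine, so \<open>\<partial>\<^sub>j log F\<close>
  is a quotient of affine functions near \<open>x i\<close>.\<close>
lemma hessian_ln_affine_in:
  assumes "affine_in j F Fj" "affine_in i F Fi" "affine_in i Fj Fij" "0 < F x"
  shows "partial i (partial j (\<lambda>y. ln (F y))) x = (Fij x * F x - Fi x * Fj x) / (F x)\<^sup>2"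
proof -
  define a where "a = F (x(i := 0))"
  define b where "b = Fi x"
  define a' where "a' = Fj (x(i := 0))"
  define b' where "b' = Fij x"
  have F_line: "F (x(i := t)) = a + t * b" for t
    unfolding a_def b_def by (rule affine_in_upd[OF assms(2)])
  have Fj_line: "Fj (x(i := t)) = a' + t * b'" for t
    unfolding a'_def b'_def by (rule affine_in_upd[OF assms(3)])
  define U where "U = {t. 0 < a + t * b}"
  have "open U" unfolding U_def by (intro open_Collect_less continuous_intros)
  have "x i \<in> U" using F_line[of "x i"] assms(4) unfolding U_def by simp
  have on_U: "(a' + t * b') / (a + t * b) = partial j (\<lambda>y. ln (F y)) (x(i := t))" if "t \<in> U" for t
    using partial_ln_affine_in[OF assms(1), of "x(i := t)"] that F_line Fj_line
    unfolding U_def by simp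
  have "((\<lambda>t. (a' + t * b') / (a + t * b)) has_field_derivative
      (b' * (a + x i * b) - (a' + x i * b') * b) / (a + x i * b)\<^sup>2) (at (x i))"
    using \<open>x i \<in> U\<close> unfolding U_def
    by (auto intro!: derivative_eq_intros simp: field_simps power2_eq_square)
  then have "((\<lambda>t. partial j (\<lambda>y. ln (F y)) (x(i := t))) has_field_derivative
      (b' * (a + x i * b) - (a' + x i * b') * b) / (a + x i * b)\<^sup>2) (at (x i))"
    using \<open>open U\<close> \<open>x i \<in> U\<close> on_U by (rule has_field_derivative_transform_within_open)
  then have "partial i (partial j (\<lambda>y. ln (F y))) x
      = (b' * (a + x i * b) - (a' + x i * b') * b) / (a + x i * b)\<^sup>2"
    unfolding partial_def[of i] by (rule DERIV_imp_deriv)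
  moreover have "F x = a + x i * b" "Fj x = a' + x i * b'"
    using F_line[of "x i"] Fj_line[of "x i"] by simp_all
  ultimately show ?thesis by (simp add: b_def b'_def algebra_simps)
qed

lemma gen_poly_upd_notin: "i \<notin> A \<Longrightarrow> gen_poly A c (x(i := t)) = gen_poly A c x"
  unfolding gen_poly_def by (intro sum.cong refl arg_cong2[where f = "(*)"] prod.cong) auto

lemma gen_poly_insert:
  assumes "finite A" "i \<notin> A"
  shows "gen_poly (insert i A) c y = gen_poly A c y + y i * gen_poly A (\<lambda>T. c (insert i T)) y"
proof -
  have "inj_on (insert i) (Pow A)"
    using assms(2) unfolding inj_on_def by (metis PowD insert_ident subsetD)
  then have "gen_poly (insert i A) c y
      = gen_poly A c y + (\<Sum>T\<in>Pow A. c (insert i T) * (\<Prod>j\<in>insert i T. y j))"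
    unfolding gen_poly_def Pow_insert using assms
    by (subst sum.union_disjoint) (auto simp: sum.reindex)
  also have "(\<Sum>T\<in>Pow A. c (insert i T) * (\<Prod>j\<in>insert i T. y j))
      = y i * gen_poly A (\<lambda>T. c (insert i T)) y"
    unfolding gen_poly_def sum_distrib_left
  proof (intro sum.cong refl)
    fix T assume "T \<in> Pow A"
    then have "finite T" "i \<notin> T" using assms finite_subset by auto
    then show "c (insert i T) * (\<Prod>j\<in>insert i T. y j) = y i * (c (insert i T) * (\<Prod>j\<in>T. y j))"
      by simp
  qed
  finally show ?thesis .
qed

lemma gen_poly_upd_in:
  assumes "finite A" "i \<in> A"
  shows "gen_poly A c (x(i := t))
    = gen_poly (A - {i}) c x + t * gen_poly (A - {i}) (\<lambda>T. c (insert i T)) x"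
  using gen_poly_insert[of "A - {i}" i c "x(i := t)"] assms
  by (simp add: insert_absorb gen_poly_upd_notin fun_upd_same del: fun_upd_apply)

definition link_poly :: "'a set \<Rightarrow> ('a set \<Rightarrow> real) \<Rightarrow> 'a set \<Rightarrow> ('a \<Rightarrow> real) \<Rightarrow> real" where
  "link_poly E \<pi> J = gen_poly (E - J) (\<lambda>T. \<pi> (T \<union> J))"

lemma affine_in_link_poly:
  assumes "finite E" "i \<in> E - J"
  shows "affine_in i (link_poly E \<pi> J) (link_poly E \<pi> (insert i J))"
proof -
  have "E - J - {i} = E - insert i J" by auto
  then show ?thesis
    unfolding affine_in_def link_poly_def using assms
    by (simp add: gen_poly_upd_in del: fun_upd_apply)
qed

lemma affine_in_link_poly_const: "i \<notin> E - J \<Longrightarrow> affine_in i (link_poly E \<pi> J) (\<lambda>_. 0)"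
  unfolding affine_in_def link_poly_def by (simp add: gen_poly_upd_notin del: fun_upd_apply)

lemma foldr_partial_gen_poly:
  assumes "finite E" "distinct xs" "set xs \<subseteq> E"
  shows "foldr partial xs (gen_poly E \<pi>) = link_poly E \<pi> (set xs)"
  using assms(2,3)
proof (induction xs)
  case Nil
  then show ?case by (simp add: link_poly_def)
next
  case (Cons a xs)
  then have "a \<in> E - set xs" by auto
  then show ?case
    using Cons by (simp add: partial_affine_in[OF affine_in_link_poly[OF assms(1)]])
qed

lemma partial_set_gen_poly:
  fixes E :: "'a::linorder set"
  assumes "finite E" "J \<subseteq> E"
  shows "partial_set J (gen_poly E \<pi>) = link_poly E \<pi> J"
  using foldr_partial_gen_poly[OF assms(1), of "sorted_list_of_set J" \<pi>] assms
  by (simp add: partial_set_def finite_subset)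

definition link_mass :: "('a set \<Rightarrow> real) \<Rightarrow> 'a set \<Rightarrow> real" where
  "link_mass \<pi> J = (\<Sum>B\<in>{B \<in> support \<pi>. J \<subseteq> B}. \<pi> B)"

lemma link_mass_eq_0: "J \<notin> indep \<pi> \<Longrightarrow> link_mass \<pi> J = 0"
  unfolding link_mass_def indep_def by (metis (no_types, lifting) mem_Collect_eq sum.neutral)

lemma wt_eq_link_mass: "wt \<pi> r J = fact (r - card J) * link_mass \<pi> J"
  unfolding wt_def using link_mass_eq_0[of J \<pi>] by (simp add: link_mass_def)

locale homogeneous_weights =
  fixes E :: "'a set" and \<pi> :: "'a set \<Rightarrow> real" and r :: nat
  assumes finite_E: "finite E"
    and nonneg: "\<And>S. 0 \<le> \<pi> S"
    and vanish_outside: "\<And>S. \<not> S \<subseteq> E \<Longrightarrow> \<pi> S = 0"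
    and card_support: "\<And>B. B \<in> support \<pi> \<Longrightarrow> card B = r"
begin

lemma support_subset: "B \<in> support \<pi> \<Longrightarrow> B \<subseteq> E"
  using vanish_outside unfolding support_def by blast

lemma finite_support: "finite (support \<pi>)"
  using finite_E support_subset by (metis Pow_iff finite_Pow_iff finite_subset subsetI)

lemma indep_subset: "J \<in> indep \<pi> \<Longrightarrow> J \<subseteq> E"
  unfolding indep_def using support_subset by blast

lemma link_mass_nonneg: "0 \<le> link_mass \<pi> J"
  unfolding link_mass_def by (simp add: nonneg sum_nonneg)

lemma link_mass_pos:
  assumes "J \<in> indep \<pi>"
  shows "0 < link_mass \<pi> J"
proof -
  obtain B where "B \<in> support \<pi>" "J \<subseteq> B" using assms unfolding indep_def by blast
  moreover from this have "0 < \<pi> B" using nonneg[of B] unfolding support_def by simp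
  ultimately show ?thesis
    unfolding link_mass_def using finite_support nonneg by (intro sum_pos2[of _ B]) auto
qed

lemma link_poly_ones:
  assumes "J \<subseteq> E"
  shows "link_poly E \<pi> J (\<lambda>_. 1) = link_mass \<pi> J"
proof -
  have "link_poly E \<pi> J (\<lambda>_. 1) = (\<Sum>B\<in>{B. J \<subseteq> B \<and> B \<subseteq> E}. \<pi> B)"
    unfolding link_poly_def gen_poly_def
    by (rule sum.reindex_bij_witness[where i = "\<lambda>B. B - J" and j = "\<lambda>T. T \<union> J"])
      (use assms in auto)
  also have "\<dots> = link_mass \<pi> J"
    unfolding link_mass_def using finite_E support_subset vanish_outside
    by (intro sum.mono_neutral_right) (auto simp: support_def)
  finally show ?thesis .
qed

text \<open>Each \<open>B \<supseteq> J\<close> in the support is counted once for each of its \<open>r - |J|\<close> elements outside \<open>J\<close>.\<close>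
lemma sum_link_mass_insert:
  assumes "J \<subseteq> E"
  shows "(\<Sum>j\<in>E - J. link_mass \<pi> (insert j J)) = real (r - card J) * link_mass \<pi> J"
proof -
  have "(\<Sum>j\<in>E - J. link_mass \<pi> (insert j J))
      = (\<Sum>B\<in>support \<pi>. \<Sum>j\<in>E - J. if insert j J \<subseteq> B then \<pi> B else 0)"
    unfolding link_mass_def using finite_support finite_E
    by (simp add: sum.inter_filter sum.swap[of _ "E - J"])
  also have "\<dots> = (\<Sum>B\<in>support \<pi>. if J \<subseteq> B then real (r - card J) * \<pi> B else 0)"
  proof (intro sum.cong refl)
    fix B assume B: "B \<in> support \<pi>"
    have "finite J" using assms finite_E finite_subset by blast
    then have "J \<subseteq> B \<Longrightarrow> card (B - J) = r - card J"
      using card_support[OF B] by (simp add: card_Diff_subset)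
    moreover have "{j \<in> E - J. j \<in> B} = B - J" using support_subset[OF B] by auto
    ultimately show "(\<Sum>j\<in>E - J. if insert j J \<subseteq> B then \<pi> B else 0)
        = (if J \<subseteq> B then real (r - card J) * \<pi> B else 0)"
      using finite_E by (auto simp: sum.inter_filter[symmetric])
  qed
  also have "\<dots> = real (r - card J) * link_mass \<pi> J"
    unfolding link_mass_def using finite_support
    by (simp add: sum.inter_filter sum_distrib_left if_distrib cong: if_cong)
  finally show ?thesis .
qed

lemma sum_link_mass_Omega:
  assumes "J \<subseteq> E"
  shows "(\<Sum>x\<in>Omega E \<pi> J. link_mass \<pi> (insert x J)) = real (r - card J) * link_mass \<pi> J"
proof -
  have "(\<Sum>x\<in>Omega E \<pi> J. link_mass \<pi> (insert x J)) = (\<Sum>x\<in>E - J. link_mass \<pi> (insert x J))"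
    using finite_E link_mass_eq_0 unfolding Omega_def by (intro sum.mono_neutral_left) auto
  then show ?thesis using sum_link_mass_insert[OF assms] by simp
qed

end

locale link_walk = homogeneous_weights E \<pi> r for E :: "'a::linorder set" and \<pi> r +
  fixes I :: "'a set"
  assumes I_indep: "I \<in> indep \<pi>"
    and card_I: "card I + 2 \<le> r"
begin

abbreviation k :: nat where "k \<equiv> r - card I"

definition pair_mass :: "'a \<Rightarrow> 'a \<Rightarrow> real" where
  "pair_mass x y = (if x = y then 0 else link_mass \<pi> (insert x (insert y I)))"

definition link_kernel :: "'a \<Rightarrow> 'a \<Rightarrow> real" where
  "link_kernel x y = pair_mass x y / (real k * real (k - 1) * link_mass \<pi> I)"

lemma I_subset: "I \<subseteq> E"
  using I_indep by (rule indep_subset)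

lemma finite_I: "finite I"
  using I_subset finite_E by (rule finite_subset)

lemma mem_Omega: "x \<in> Omega E \<pi> I \<longleftrightarrow> x \<notin> I \<and> insert x I \<in> indep \<pi>"
  unfolding Omega_def using indep_subset by blast

lemma finite_Omega: "finite (Omega E \<pi> I)"
  using finite_E unfolding Omega_def by simp

lemma link_mass_I_pos: "0 < link_mass \<pi> I"
  using I_indep by (rule link_mass_pos)

lemma k_pos: "0 < real k" "0 < real (k - 1)"
  using card_I by auto

lemma pi_link_eq:
  assumes "x \<in> Omega E \<pi> I"
  shows "pi_link \<pi> r I x = link_mass \<pi> (insert x I) / (real k * link_mass \<pi> I)"
proof -
  have "r - card (insert x I) = k - 1" using assms finite_I mem_Omega by simp
  then have "pi_link \<pi> r I x = fact (k - 1) * link_mass \<pi> (insert x I) / (fact k * link_mass \<pi> I)"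
    unfolding pi_link_def wt_eq_link_mass by simp
  also have "\<dots> = link_mass \<pi> (insert x I) / (real k * link_mass \<pi> I)"
    using k_pos by (simp add: fact_reduce[of k])
  finally show ?thesis .
qed

lemma pi_link_pos: "x \<in> Omega E \<pi> I \<Longrightarrow> 0 < pi_link \<pi> r I x"
  using link_mass_pos mem_Omega link_mass_I_pos k_pos by (simp add: pi_link_eq)

lemma sum_pi_link: "(\<Sum>x\<in>Omega E \<pi> I. pi_link \<pi> r I x) = 1"
  using sum_link_mass_Omega[OF I_subset] link_mass_I_pos k_pos
  by (simp add: pi_link_eq sum_divide_distrib[symmetric])

lemma sum_pair_mass:
  assumes "x \<in> Omega E \<pi> I"
  shows "(\<Sum>y\<in>Omega E \<pi> I. pair_mass x y) = real (k - 1) * link_mass \<pi> (insert x I)"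
proof -
  have x: "x \<notin> I" "insert x I \<subseteq> E" using assms mem_Omega indep_subset by auto
  have "(\<Sum>y\<in>Omega E \<pi> I. pair_mass x y)
      = (\<Sum>y\<in>Omega E \<pi> (insert x I). link_mass \<pi> (insert y (insert x I)))"
  proof (rule sum.mono_neutral_cong_right[OF finite_Omega])
    show "Omega E \<pi> (insert x I) \<subseteq> Omega E \<pi> I"
      unfolding Omega_def indep_def by auto
    show "\<forall>y\<in>Omega E \<pi> I - Omega E \<pi> (insert x I). pair_mass x y = 0"
      unfolding pair_mass_def Omega_def by (auto simp: insert_commute intro!: link_mass_eq_0)
    show "pair_mass x y = link_mass \<pi> (insert y (insert x I))" if "y \<in> Omega E \<pi> (insert x I)" for y
      using that unfolding pair_mass_def Omega_def by (auto simp: insert_commute)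
  qed
  also have "\<dots> = real (k - 1) * link_mass \<pi> (insert x I)"
    using sum_link_mass_Omega[OF x(2)] x(1) finite_I by simp
  finally show ?thesis .
qed

lemma P_down_up_eq:
  assumes "x \<in> Omega E \<pi> I" "y \<in> Omega E \<pi> I"
  shows "P_down_up \<pi> r I x y = (if x = y then 1/2 else link_kernel x y / (2 * pi_link \<pi> r I x))"
proof (cases "x = y")
  case False
  have "r - card (insert x I) = k - 1" "r - card (insert x (insert y I)) = k - 1 - 1"
    using assms False finite_I mem_Omega by auto
  then have "P_down_up \<pi> r I x y
      = fact (k - 1 - 1) * link_mass \<pi> (insert x (insert y I))
        / (2 * (fact (k - 1) * link_mass \<pi> (insert x I)))"
    using False by (simp add: P_down_up_def wt_def[symmetric] wt_eq_link_mass link_mass_eq_0)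
  also have "\<dots> = link_mass \<pi> (insert x (insert y I)) / (2 * real (k - 1) * link_mass \<pi> (insert x I))"
  proof -
    have "(fact (k - 1) :: real) = real (k - 1) * fact (k - 1 - 1)"
      using k_pos by (intro fact_reduce) simp
    then show ?thesis by simp
  qed
  also have "\<dots> = link_kernel x y / (2 * pi_link \<pi> r I x)"
    using False link_mass_I_pos k_pos
    unfolding link_kernel_def pair_mass_def pi_link_eq[OF assms(1)]
    by (simp add: field_simps del: of_nat_diff)
  finally show ?thesis using False by simp
qed (simp add: P_down_up_def)

lemma walk_kernel_link: "walk_kernel (Omega E \<pi> I) (pi_link \<pi> r I) link_kernel"
proof
  show "link_kernel x y = link_kernel y x" for x y
    unfolding link_kernel_def pair_mass_def by (simp add: insert_commute)
  show "0 \<le> link_kernel x y" for x y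
    unfolding link_kernel_def pair_mass_def
    using link_mass_nonneg link_mass_I_pos k_pos by simp
  show "(\<Sum>y\<in>Omega E \<pi> I. link_kernel x y) = pi_link \<pi> r I x" if "x \<in> Omega E \<pi> I" for x
    using sum_pair_mass[OF that] link_mass_I_pos k_pos
    unfolding link_kernel_def pi_link_eq[OF that] by (simp add: sum_divide_distrib[symmetric])
qed (auto simp: finite_Omega pi_link_pos sum_pi_link link_kernel_def pair_mass_def)

lemma two_points_Omega:
  obtains u v where "u \<in> Omega E \<pi> I" "v \<in> Omega E \<pi> I" "u \<noteq> v"
proof -
  obtain B where B: "B \<in> support \<pi>" "I \<subseteq> B" using I_indep unfolding indep_def by blast
  then have "2 \<le> card (B - I)" using card_support[OF B(1)] card_I finite_I by (simp add: card_Diff_subset)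
  then obtain T where "T \<subseteq> B - I" "card T = 2" by (rule obtain_subset_with_card_n)
  then obtain u v where "u \<in> B - I" "v \<in> B - I" "u \<noteq> v" by (auto simp: card_2_iff)
  then have "u \<in> Omega E \<pi> I" "v \<in> Omega E \<pi> I"
    using B support_subset unfolding Omega_def indep_def by blast+
  then show ?thesis using that \<open>u \<noteq> v\<close> by blast
qed

lemma hessian_ln_link_poly:
  assumes "i \<in> Omega E \<pi> I" "j \<in> Omega E \<pi> I"
  shows "partial i (partial j (\<lambda>x. ln (link_poly E \<pi> I x))) (\<lambda>_. 1)
    = (pair_mass i j * link_mass \<pi> I - link_mass \<pi> (insert i I) * link_mass \<pi> (insert j I))
      / (link_mass \<pi> I)\<^sup>2"
proof -
  have ij: "i \<in> E - I" "j \<in> E - I" "insert i I \<subseteq> E" "insert j I \<subseteq> E"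
    using assms mem_Omega indep_subset by auto
  have Fj: "affine_in j (link_poly E \<pi> I) (link_poly E \<pi> (insert j I))"
    using finite_E ij(2) by (rule affine_in_link_poly)
  have Fi: "affine_in i (link_poly E \<pi> I) (link_poly E \<pi> (insert i I))"
    using finite_E ij(1) by (rule affine_in_link_poly)
  define Fij where "Fij = (if i = j then (\<lambda>_. 0) else link_poly E \<pi> (insert i (insert j I)))"
  have "affine_in i (link_poly E \<pi> (insert j I)) Fij"
    unfolding Fij_def using ij finite_E
    by (auto intro: affine_in_link_poly affine_in_link_poly_const)
  moreover have "0 < link_poly E \<pi> I (\<lambda>_. 1)"
    using link_mass_I_pos by (simp add: link_poly_ones I_subset)
  ultimately have "partial i (partial j (\<lambda>x. ln (link_poly E \<pi> I x))) (\<lambda>_. 1)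
    = (Fij (\<lambda>_. 1) * link_poly E \<pi> I (\<lambda>_. 1)
        - link_poly E \<pi> (insert i I) (\<lambda>_. 1) * link_poly E \<pi> (insert j I) (\<lambda>_. 1))
      / (link_poly E \<pi> I (\<lambda>_. 1))\<^sup>2"
    by (rule hessian_ln_affine_in[OF Fj Fi])
  moreover have "Fij (\<lambda>_. 1) = pair_mass i j"
    unfolding Fij_def pair_mass_def using ij by (simp add: link_poly_ones)
  ultimately show ?thesis
    by (simp add: link_poly_ones[OF I_subset] link_poly_ones[OF ij(3)] link_poly_ones[OF ij(4)])
qed

lemma link_quadratic_le:
  assumes "strongly_log_concave E \<pi>"
  shows "link_mass \<pi> I * (\<Sum>x\<in>Omega E \<pi> I. \<Sum>y\<in>Omega E \<pi> I. pair_mass x y * h x * h y)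
    \<le> (\<Sum>x\<in>Omega E \<pi> I. link_mass \<pi> (insert x I) * h x)\<^sup>2"
proof -
  let ?\<Omega> = "Omega E \<pi> I" and ?Z = "link_mass \<pi> I" and ?S = "\<lambda>x. link_mass \<pi> (insert x I)"
  let ?H = "\<lambda>i j. partial i (partial j (\<lambda>x. ln (link_poly E \<pi> I x))) (\<lambda>_. 1)"
  define v where "v x = (if x \<in> ?\<Omega> then h x else 0)" for x
  have "?\<Omega> \<subseteq> E" unfolding Omega_def by blast
  have "0 \<ge> (\<Sum>i\<in>E. \<Sum>j\<in>E. v i * v j * ?H i j)"
    using assms[unfolded strongly_log_concave_def, rule_format, OF I_subset, of v]
    by (simp only: partial_set_gen_poly[OF finite_E I_subset])
  also have "(\<Sum>i\<in>E. \<Sum>j\<in>E. v i * v j * ?H i j) = (\<Sum>i\<in>?\<Omega>. \<Sum>j\<in>E. v i * v j * ?H i j)"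
    using finite_E \<open>?\<Omega> \<subseteq> E\<close> by (intro sum.mono_neutral_right) (auto simp: v_def)
  also have "\<dots> = (\<Sum>i\<in>?\<Omega>. \<Sum>j\<in>?\<Omega>. h i * h j * ?H i j)"
    using finite_E \<open>?\<Omega> \<subseteq> E\<close>
    by (intro sum.cong refl sum.mono_neutral_cong_right) (auto simp: v_def)
  also have "\<dots> = (\<Sum>i\<in>?\<Omega>. \<Sum>j\<in>?\<Omega>. (?Z * (pair_mass i j * h i * h j) - (?S i * h i) * (?S j * h j)) / ?Z\<^sup>2)"
    by (intro sum.cong refl) (simp add: hessian_ln_link_poly algebra_simps)
  also have "\<dots> = (?Z * (\<Sum>x\<in>?\<Omega>. \<Sum>y\<in>?\<Omega>. pair_mass x y * h x * h y) - (\<Sum>x\<in>?\<Omega>. ?S x * h x)\<^sup>2) / ?Z\<^sup>2"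
    unfolding power2_eq_square[of "\<Sum>x\<in>?\<Omega>. ?S x * h x"] sum_product
    by (simp add: sum_divide_distrib[symmetric] sum_subtractf sum_distrib_left)
  finally show ?thesis using link_mass_I_pos by (simp add: divide_le_0_iff)
qed

lemma spectral_walk_kernel_link:
  assumes "strongly_log_concave E \<pi>"
  shows "spectral_walk_kernel (Omega E \<pi> I) (pi_link \<pi> r I) link_kernel"
proof -
  interpret walk_kernel "Omega E \<pi> I" "pi_link \<pi> r I" link_kernel by (rule walk_kernel_link)
  show ?thesis
  proof
    fix h assume centred: "expect (Omega E \<pi> I) (pi_link \<pi> r I) h = 0"
    have "expect (Omega E \<pi> I) (pi_link \<pi> r I) h
        = (\<Sum>x\<in>Omega E \<pi> I. link_mass \<pi> (insert x I) * h x) / (real k * link_mass \<pi> I)"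
      unfolding expect_def sum_divide_distrib by (intro sum.cong refl) (simp add: pi_link_eq)
    then have "(\<Sum>x\<in>Omega E \<pi> I. link_mass \<pi> (insert x I) * h x) = 0"
      using centred link_mass_I_pos k_pos by simp
    then have "(\<Sum>x\<in>Omega E \<pi> I. \<Sum>y\<in>Omega E \<pi> I. pair_mass x y * h x * h y) \<le> 0"
      using link_quadratic_le[OF assms, of h] link_mass_I_pos by (simp add: mult_le_0_iff)
    moreover have "(\<Sum>x\<in>Omega E \<pi> I. \<Sum>y\<in>Omega E \<pi> I. link_kernel x y * h x * h y)
        = (\<Sum>x\<in>Omega E \<pi> I. \<Sum>y\<in>Omega E \<pi> I. pair_mass x y * h x * h y)
          / (real k * real (k - 1) * link_mass \<pi> I)"
      unfolding link_kernel_def sum_divide_distrib by simp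
    ultimately show "(\<Sum>x\<in>Omega E \<pi> I. \<Sum>y\<in>Omega E \<pi> I. link_kernel x y * h x * h y) \<le> 0"
      using link_mass_I_pos k_pos by (simp add: divide_le_0_iff)
  qed
qed

end

theorem lemma5p1:
  fixes E :: "'a::linorder set" and \<pi> :: "'a set \<Rightarrow> real" and r :: nat and I :: "'a set"
  assumes "finite E"
    and "\<forall>S. \<pi> S \<ge> 0"
    and "\<forall>S. \<not> S \<subseteq> E \<longrightarrow> \<pi> S = 0"
    and "(\<Sum>S\<in>Pow E. \<pi> S) = 1"
    and "\<forall>S\<in>support \<pi>. card S = r"
    and "strongly_log_concave E \<pi>"
    and "matroid_bases E (support \<pi>)"
    and "I \<in> indep \<pi>"
    and "card I + 2 \<le> r"
  shows "mlsi_const (Omega E \<pi> I) (pi_link \<pi> r I) (P_down_up \<pi> r I) \<ge> 1/2"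
proof -
  interpret link_walk E \<pi> r I
    using assms(1-3,5,8,9) by unfold_locales auto
  interpret spectral_walk_kernel "Omega E \<pi> I" "pi_link \<pi> r I" link_kernel
    using assms(6) by (rule spectral_walk_kernel_link)
  obtain u v where "u \<in> Omega E \<pi> I" "v \<in> Omega E \<pi> I" "u \<noteq> v"
    by (rule two_points_Omega)
  with mlsi_const_ge_half[OF P_down_up_eq] show ?thesis by simp
qed

end
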